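(* Let $X_1,\ldots,X_N$ be independent random vectors in $\mathbb R^n$ and let $\psi>0$ be such that $\sup_{i\le N}\sup_{y\in S^{n-1}}\|\langle X_i,y\rangle\|_{\psi_1}\le\psi$. Let $1\le k,m\le N$, $\varepsilon,\alpha\in(0,1]$, $\beta>0$ and $L>0$. Let $B(m,\beta)$ be the set of vectors $x\in\beta B_2^N$ with $|\mathrm{supp}\,x|\le m$, and let $\mathcal B\subset B(m,\beta)$ be a (deterministic) set of cardinality $M$. Then $$\mathbb P\Big(\sup_{F\subset\{1,\ldots,N\},\,|F|\le k}\ \sup_{x\in\mathcal B}\ \sup_{z\in\mathcal N(F,\varepsilon,\alpha)}\ \sum_{i\in F}\Big|\Big\langle z_iX_i,\sum_{j\notin F}x_jX_j\Big\rangle\Big|>\psi\,\alpha\beta LA_m\Big)\le M\Big(\frac{6eN}{k\varepsilon}\Big)^k e^{-L}.$$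
   Context: For a random variable $Y$, $\|Y\|_{\psi_1}=\inf\{C>0:\mathbb E\exp(|Y|/C)\le 2\}$. $A$ denotes the random $n\times N$ matrix whose columns are $X_1,\ldots,X_N$, and for $1\le m\le N$, $A_m=\sup\{|Az|: z\in S^{N-1},\ |\mathrm{supp}\,z|\le m\}$ (Euclidean norms). For $E\subset\{1,\ldots,N\}$, $\mathbb R^E$ is the set of vectors in $\mathbb R^N$ supported in $E$. For $\varepsilon,\alpha\in(0,1]$, $\mathcal N(E,\varepsilon,\alpha)$ denotes a fixed $\varepsilon$-net (in the Euclidean metric) of $B_2^N\cap\alpha B_\infty^N\cap\mathbb R^E$ of cardinality at most $(3/\varepsilon)^{|E|}$; $z_i$, $x_j$ denote coordinates. *)

theory Defs
  imports "HOL-Probability.Probability"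
begin

text \<open>psi_1 (Orlicz) norm of a real random variable, as an extended real
  (infimum of the empty set is +infinity).\<close>
definition psi1_norm :: "'a measure \<Rightarrow> ('a \<Rightarrow> real) \<Rightarrow> ereal" where
  "psi1_norm M Y = Inf {ereal C | C. C > 0 \<and>
      (\<integral>\<^sup>+ \<omega>. ennreal (exp (\<bar>Y \<omega>\<bar> / C)) \<partial>M) \<le> 2}"

text \<open>Support of a vector in R^N (index type 'N, N = CARD('N)).\<close>
definition supp_vec :: "real ^ 'N \<Rightarrow> 'N set" where
  "supp_vec z = {i. z $ i \<noteq> 0}"

definition A_sparse :: "('N::finite \<Rightarrow> 'a \<Rightarrow> real ^ 'n) \<Rightarrow> nat \<Rightarrow> 'a \<Rightarrow> real" where
  "A_sparse X m \<omega> = Sup {norm (\<Sum>j\<in>UNIV. (z $ j) *\<^sub>R X j \<omega>) | z :: real ^ 'N.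
       norm z = 1 \<and> card (supp_vec z) \<le> m}"

definition net_domain :: "'N set \<Rightarrow> real \<Rightarrow> (real ^ 'N) set" where
  "net_domain E \<alpha> = {z. norm z \<le> 1 \<and> (\<forall>i. \<bar>z $ i\<bar> \<le> \<alpha>) \<and> supp_vec z \<subseteq> E}"

definition is_net_family :: "('N::finite set \<Rightarrow> (real ^ 'N) set) \<Rightarrow> real \<Rightarrow> real \<Rightarrow> bool" where
  "is_net_family Net \<epsilon> \<alpha> \<longleftrightarrow> (\<forall>E. Net E \<subseteq> net_domain E \<alpha> \<and>
      (\<forall>y\<in>net_domain E \<alpha>. \<exists>z\<in>Net E. dist y z \<le> \<epsilon>) \<and>
      finite (Net E) \<and> real (card (Net E)) \<le> (3 / \<epsilon>) ^ card E)"

definition B_sparse :: "nat \<Rightarrow> real \<Rightarrow> (real ^ 'N::finite) set" where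
  "B_sparse m \<beta> = {x. norm x \<le> \<beta> \<and> card (supp_vec x) \<le> m}"

end

theory Submission
  imports Defs
begin

(* Proof idea (Chernoff bound plus union bound).  Fix a support F with |F| <= k, a vector
   x in the set B and a net point z in Net F, and put Y = sum_{j not in F} x_j X_j.  Since
   |Y| <= beta * A_m, the event in question forces, for some triple (F, x, z),
     exp L <= exp (sum_{i in F} |z_i| |<X_i, Y>| / (psi * alpha * |Y|)).
   The vectors X_i with i in F are independent of Y, so by Fubini the expectation of the
   right-hand side factorises (conditionally on Y) into |F| one-dimensional moments, each
   at most 2 by the psi_1 hypothesis (as |z_i| <= alpha).  Markov's inequality and a union
   bound over the triples give probability at most exp(-L) * sum 2^|F|, and counting the
   triples (binomial estimate for the supports, (3/eps)^|F| net points) gives the bound. *)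

section \<open>Moments controlled by the psi_1 norm\<close>

text \<open>If the psi_1 norm of Y is at most psi, the infimum in its definition is attained in
  the limit: the exponential moment at scale psi itself is at most 2 (Fatou's lemma).\<close>
lemma psi1_norm_moment_bound:
  fixes Y :: "'a \<Rightarrow> real"
  assumes Ym: "Y \<in> borel_measurable M"
    and norm_le: "psi1_norm M Y \<le> ereal \<psi>" and "\<psi> > 0"
  shows "(\<integral>\<^sup>+ \<omega>. ennreal (exp (\<bar>Y \<omega>\<bar> / \<psi>)) \<partial>M) \<le> 2"
proof -
  define C where "C n = \<psi> + 1 / real (Suc n)" for n
  have moment_C: "(\<integral>\<^sup>+ \<omega>. ennreal (exp (\<bar>Y \<omega>\<bar> / C n)) \<partial>M) \<le> 2" for n
  proof -
    have "ereal \<psi> < ereal (C n)" unfolding C_def by simp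
    with norm_le have "psi1_norm M Y < ereal (C n)" by (rule le_less_trans)
    then obtain D where D: "D > 0" "(\<integral>\<^sup>+ \<omega>. ennreal (exp (\<bar>Y \<omega>\<bar> / D)) \<partial>M) \<le> 2" "D < C n"
      unfolding psi1_norm_def Inf_less_iff by auto
    have "(\<integral>\<^sup>+ \<omega>. ennreal (exp (\<bar>Y \<omega>\<bar> / C n)) \<partial>M) \<le> (\<integral>\<^sup>+ \<omega>. ennreal (exp (\<bar>Y \<omega>\<bar> / D)) \<partial>M)"
      by (intro nn_integral_mono ennreal_leI) (use D in \<open>auto intro!: divide_left_mono mult_pos_pos\<close>)
    with D show ?thesis by order
  qed
  have "C \<longlonglongrightarrow> \<psi>" unfolding C_def
    using LIMSEQ_inverse_real_of_nat_add[of \<psi>] by (simp add: divide_inverse)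
  then have lim: "(\<lambda>n. ennreal (exp (\<bar>Y \<omega>\<bar> / C n))) \<longlonglongrightarrow> ennreal (exp (\<bar>Y \<omega>\<bar> / \<psi>))" for \<omega>
    using \<open>\<psi> > 0\<close> by (intro tendsto_ennrealI tendsto_intros) auto
  have "(\<integral>\<^sup>+ \<omega>. ennreal (exp (\<bar>Y \<omega>\<bar> / \<psi>)) \<partial>M)
      = (\<integral>\<^sup>+ \<omega>. liminf (\<lambda>n. ennreal (exp (\<bar>Y \<omega>\<bar> / C n))) \<partial>M)"
    by (intro nn_integral_cong) (metis lim lim_imp_Liminf trivial_limit_sequentially)
  also have "\<dots> \<le> liminf (\<lambda>n. \<integral>\<^sup>+ \<omega>. ennreal (exp (\<bar>Y \<omega>\<bar> / C n)) \<partial>M)"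
    by (intro nn_integral_liminf) (use Ym in measurable)
  also have "\<dots> \<le> 2"
    by (intro Liminf_le always_eventually allI moment_C) simp
  finally show ?thesis .
qed

lemma psi1_directional_moment:
  fixes X :: "'N \<Rightarrow> 'a \<Rightarrow> real ^ 'n::finite"
  assumes P: "prob_space M" and Xm: "\<And>i. X i \<in> borel_measurable M" and "\<psi> > 0"
    and psi: "\<And>i y. norm y = 1 \<Longrightarrow> psi1_norm M (\<lambda>\<omega>. X i \<omega> \<bullet> y) \<le> ereal \<psi>"
    and "0 < \<alpha>" and t: "\<bar>t\<bar> \<le> \<alpha>"
  shows "(\<integral>\<^sup>+ \<omega>. ennreal (exp (\<bar>t\<bar> * \<bar>X i \<omega> \<bullet> Y\<bar> / (\<psi> * \<alpha> * norm Y))) \<partial>M) \<le> 2"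
proof (cases "Y = 0")
  case True
  interpret prob_space M by fact
  show ?thesis using True by (simp add: emeasure_space_1)
next
  case False
  define u where "u = (1 / norm Y) *\<^sub>R Y"
  have unit_u: "norm u = 1" using False unfolding u_def by simp
  have "exp (\<bar>t\<bar> * \<bar>X i \<omega> \<bullet> Y\<bar> / (\<psi> * \<alpha> * norm Y)) \<le> exp (\<bar>X i \<omega> \<bullet> u\<bar> / \<psi>)" for \<omega>
  proof -
    have unit_dir: "\<bar>X i \<omega> \<bullet> Y\<bar> / norm Y = \<bar>X i \<omega> \<bullet> u\<bar>"
      using False unfolding u_def by (simp add: abs_mult)
    have "\<bar>t\<bar> * \<bar>X i \<omega> \<bullet> Y\<bar> / (\<psi> * \<alpha> * norm Y) = (\<bar>t\<bar> / \<alpha>) * (\<bar>X i \<omega> \<bullet> Y\<bar> / norm Y / \<psi>)"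
      by (simp add: field_simps)
    also have "\<dots> = (\<bar>t\<bar> / \<alpha>) * (\<bar>X i \<omega> \<bullet> u\<bar> / \<psi>)"
      by (simp add: unit_dir)
    also have "\<dots> \<le> \<bar>X i \<omega> \<bullet> u\<bar> / \<psi>"
      using t \<open>0 < \<alpha>\<close> \<open>\<psi> > 0\<close> by (intro mult_left_le_one_le) auto
    finally show ?thesis by simp
  qed
  then have "(\<integral>\<^sup>+ \<omega>. ennreal (exp (\<bar>t\<bar> * \<bar>X i \<omega> \<bullet> Y\<bar> / (\<psi> * \<alpha> * norm Y))) \<partial>M)
     \<le> (\<integral>\<^sup>+ \<omega>. ennreal (exp (\<bar>X i \<omega> \<bullet> u\<bar> / \<psi>)) \<partial>M)"
    by (intro nn_integral_mono ennreal_leI)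
  also have "\<dots> \<le> 2"
    by (rule psi1_norm_moment_bound[OF _ psi[OF unit_u] \<open>\<psi> > 0\<close>]) (use Xm in measurable)
  finally show ?thesis .
qed

section \<open>The decoupled exponential moment\<close>

definition off_block_sum :: "'N::finite set \<Rightarrow> real ^ 'N \<Rightarrow> ('N \<Rightarrow> real ^ 'n) \<Rightarrow> real ^ 'n" where
  "off_block_sum F x g = (\<Sum>j\<in>UNIV - F. (x $ j) *\<^sub>R g j)"

definition cross_stat :: "'N::finite set \<Rightarrow> real ^ 'N \<Rightarrow> real ^ 'N \<Rightarrow> ('N \<Rightarrow> real ^ 'n) \<Rightarrow> real" where
  "cross_stat F x z g = (\<Sum>i\<in>F. \<bar>z $ i\<bar> * \<bar>g i \<bullet> off_block_sum F x g\<bar>)"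

definition exp_cross :: "real \<Rightarrow> 'N::finite set \<Rightarrow> real ^ 'N \<Rightarrow> real ^ 'N \<Rightarrow> ('N \<Rightarrow> real ^ 'n) \<Rightarrow> real" where
  "exp_cross c F x z g = exp (cross_stat F x z g / (c * norm (off_block_sum F x g)))"

lemma exp_cross_measurable [measurable]:
  "(\<lambda>g. exp_cross c F x z g) \<in> borel_measurable (Pi\<^sub>M UNIV (\<lambda>_. borel :: (real ^ 'n::finite) measure))"
  unfolding exp_cross_def cross_stat_def off_block_sum_def by measurable

lemma exp_cross_random_measurable:
  fixes X :: "'N::finite \<Rightarrow> 'a \<Rightarrow> real ^ 'n::finite"
  assumes "\<And>i. X i \<in> borel_measurable M"
  shows "(\<lambda>\<omega>. exp_cross c F x z (\<lambda>i. X i \<omega>)) \<in> borel_measurable M"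
  unfolding exp_cross_def cross_stat_def off_block_sum_def using assms by measurable

text \<open>Splitting the family g into its part b off F and its part a on F, the vector Y only
  depends on b and the exponential factorises into one factor per i in F.\<close>
lemma exp_cross_merge:
  fixes a b :: "'N::finite \<Rightarrow> real ^ 'n::finite"
  shows "exp_cross c F x z (merge (UNIV - F) F (b, a)) =
    (\<Prod>i\<in>F. exp (\<bar>z $ i\<bar> * \<bar>a i \<bullet> off_block_sum F x b\<bar> / (c * norm (off_block_sum F x b))))"
proof -
  have Y: "off_block_sum F x (merge (UNIV - F) F (b, a)) = off_block_sum F x b"
    unfolding off_block_sum_def by (intro sum.cong) (auto simp: merge_def)
  have "cross_stat F x z (merge (UNIV - F) F (b, a))
      = (\<Sum>i\<in>F. \<bar>z $ i\<bar> * \<bar>a i \<bullet> off_block_sum F x b\<bar>)"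
    unfolding cross_stat_def Y by (intro sum.cong) (auto simp: merge_def)
  then show ?thesis unfolding exp_cross_def Y
    by (simp add: sum_divide_distrib exp_sum)
qed

text \<open>Conditionally on the vectors off F (frozen to b), the exponential moment over the
  independent vectors on F is a product of |F| directional moments, each at most 2.\<close>
lemma block_moment_bound:
  fixes X :: "'N::finite \<Rightarrow> 'a \<Rightarrow> real ^ 'n::finite"
  assumes P: "prob_space M" and Xm: "\<And>i. X i \<in> borel_measurable M" and "\<psi> > 0"
    and psi: "\<And>i y. norm y = 1 \<Longrightarrow> psi1_norm M (\<lambda>\<omega>. X i \<omega> \<bullet> y) \<le> ereal \<psi>"
    and "0 < \<alpha>" and z: "\<And>i. \<bar>z $ i\<bar> \<le> \<alpha>"
  shows "(\<integral>\<^sup>+ a. ennreal (exp_cross (\<psi> * \<alpha>) F x z (merge (UNIV - F) F (b, a)))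
           \<partial>(\<Pi>\<^sub>M i\<in>F. distr M borel (X i))) \<le> 2 ^ card F"
proof -
  interpret prob_space M by fact
  interpret PP: product_prob_space "\<lambda>i. distr M borel (X i)"
    by (intro product_prob_spaceI prob_space_distr Xm)
  let ?Y = "off_block_sum F x b"
  let ?factor = "\<lambda>i v. ennreal (exp (\<bar>z $ i\<bar> * \<bar>v \<bullet> ?Y\<bar> / (\<psi> * \<alpha> * norm ?Y)))"
  have "(\<integral>\<^sup>+ a. ennreal (exp_cross (\<psi> * \<alpha>) F x z (merge (UNIV - F) F (b, a)))
           \<partial>(\<Pi>\<^sub>M i\<in>F. distr M borel (X i)))
      = (\<integral>\<^sup>+ a. (\<Prod>i\<in>F. ?factor i (a i)) \<partial>(\<Pi>\<^sub>M i\<in>F. distr M borel (X i)))"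
    by (simp add: exp_cross_merge prod_ennreal)
  also have "\<dots> = (\<Prod>i\<in>F. \<integral>\<^sup>+ v. ?factor i v \<partial>distr M borel (X i))"
    by (rule PP.product_nn_integral_prod) auto
  also have "\<dots> = (\<Prod>i\<in>F. \<integral>\<^sup>+ \<omega>. ?factor i (X i \<omega>) \<partial>M)"
    by (intro prod.cong refl nn_integral_distr) (use Xm in auto)
  also have "\<dots> \<le> (\<Prod>i\<in>F. 2)"
    by (intro prod_mono_ennreal psi1_directional_moment[OF P Xm \<open>\<psi> > 0\<close> psi \<open>0 < \<alpha>\<close> z])
  finally show ?thesis by simp
qed

text \<open>The decoupling step: by independence the joint law of the X_i is the product of
  their laws, and Fubini reduces the moment to the conditional bound above.\<close>
lemma exp_cross_moment_bound:
  fixes X :: "'N::finite \<Rightarrow> 'a \<Rightarrow> real ^ 'n::finite"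
  assumes P: "prob_space M" and Xm: "\<And>i. X i \<in> borel_measurable M"
    and ind: "prob_space.indep_vars M (\<lambda>_. borel) X UNIV"
    and "\<psi> > 0"
    and psi: "\<And>i y. norm y = 1 \<Longrightarrow> psi1_norm M (\<lambda>\<omega>. X i \<omega> \<bullet> y) \<le> ereal \<psi>"
    and "0 < \<alpha>" and z: "\<And>i. \<bar>z $ i\<bar> \<le> \<alpha>"
  shows "(\<integral>\<^sup>+ \<omega>. ennreal (exp_cross (\<psi> * \<alpha>) F x z (\<lambda>i. X i \<omega>)) \<partial>M) \<le> 2 ^ card F"
proof -
  interpret prob_space M by fact
  define D where "D i = distr M borel (X i)" for i
  interpret PP: product_prob_space D
    unfolding D_def by (intro product_prob_spaceI prob_space_distr Xm)
  interpret PF: prob_space "\<Pi>\<^sub>M i\<in>UNIV - F. D i"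
    unfolding D_def by (intro prob_space_PiM prob_space_distr Xm)
  let ?h = "\<lambda>g. ennreal (exp_cross (\<psi> * \<alpha>) F x z g)"
  have joint_law: "distr M (\<Pi>\<^sub>M i\<in>UNIV. borel) (\<lambda>\<omega>. \<lambda>i\<in>UNIV. X i \<omega>) = (\<Pi>\<^sub>M i\<in>UNIV. D i)"
    unfolding D_def using indep_vars_iff_distr_eq_PiM[of UNIV X "\<lambda>_. borel"] ind Xm by simp
  have h_meas: "?h \<in> borel_measurable (\<Pi>\<^sub>M i\<in>UNIV. (borel :: (real ^ 'n) measure))"
    by measurable
  have sets_D: "sets (D i) = sets borel" for i
    unfolding D_def by simp
  have h_meas_D: "?h \<in> borel_measurable (\<Pi>\<^sub>M i\<in>(UNIV - F) \<union> F. D i)"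
    using h_meas by (simp cong: measurable_cong_sets add: sets_PiM_cong[OF _ sets_D])
  have "(\<integral>\<^sup>+ \<omega>. ?h (\<lambda>i. X i \<omega>) \<partial>M) = (\<integral>\<^sup>+ \<omega>. ?h (\<lambda>i\<in>UNIV. X i \<omega>) \<partial>M)"
    by (simp add: restrict_def)
  also have "\<dots> = (\<integral>\<^sup>+ g. ?h g \<partial>distr M (\<Pi>\<^sub>M i\<in>UNIV. borel) (\<lambda>\<omega>. \<lambda>i\<in>UNIV. X i \<omega>))"
    by (rule nn_integral_distr[symmetric]) (use Xm h_meas in measurable)
  also have "\<dots> = (\<integral>\<^sup>+ g. ?h g \<partial>(\<Pi>\<^sub>M i\<in>(UNIV - F) \<union> F. D i))"
    unfolding joint_law by simp
  also have "\<dots> = (\<integral>\<^sup>+ b. (\<integral>\<^sup>+ a. ?h (merge (UNIV - F) F (b, a)) \<partial>(\<Pi>\<^sub>M i\<in>F. D i)) \<partial>(\<Pi>\<^sub>M i\<in>UNIV - F. D i))"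
    by (rule PP.product_nn_integral_fold) (use h_meas_D in auto)
  also have "\<dots> \<le> (\<integral>\<^sup>+ b. 2 ^ card F \<partial>(\<Pi>\<^sub>M i\<in>UNIV - F. D i))"
    unfolding D_def
    by (intro nn_integral_mono block_moment_bound[OF P Xm \<open>\<psi> > 0\<close> psi \<open>0 < \<alpha>\<close> z])
  also have "\<dots> = 2 ^ card F"
    by (simp add: PF.emeasure_space_1)
  finally show ?thesis .
qed

section \<open>The sparse operator norm A_m\<close>

text \<open>The set defining A_m is bounded, so A_m is an upper bound of each of its elements
  and nonnegative (the set contains the image of a unit coordinate vector).\<close>
lemma A_sparse_bdd_above:
  fixes X :: "'N::finite \<Rightarrow> 'a \<Rightarrow> real ^ 'n::finite"
  shows "bdd_above {norm (\<Sum>j\<in>UNIV. (z $ j) *\<^sub>R X j \<omega>) | z :: real ^ 'N.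
       norm z = 1 \<and> card (supp_vec z) \<le> m}"
proof (rule bdd_aboveI, safe)
  fix z :: "real ^ 'N" assume "norm z = 1"
  have "norm (\<Sum>j\<in>UNIV. (z $ j) *\<^sub>R X j \<omega>) \<le> (\<Sum>j\<in>UNIV. norm ((z $ j) *\<^sub>R X j \<omega>))"
    by (rule norm_sum)
  also have "\<dots> \<le> (\<Sum>j\<in>UNIV. norm (X j \<omega>))"
  proof (intro sum_mono)
    fix j
    have "\<bar>z $ j\<bar> \<le> 1" using component_le_norm_cart[of z j] \<open>norm z = 1\<close> by simp
    then show "norm ((z $ j) *\<^sub>R X j \<omega>) \<le> norm (X j \<omega>)"
      by (simp add: mult_left_le_one_le)
  qed
  finally show "norm (\<Sum>j\<in>UNIV. (z $ j) *\<^sub>R X j \<omega>) \<le> (\<Sum>j\<in>UNIV. norm (X j \<omega>))" .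
qed

lemma A_sparse_upper:
  fixes X :: "'N::finite \<Rightarrow> 'a \<Rightarrow> real ^ 'n::finite"
  assumes "norm z = 1" "card (supp_vec z) \<le> m"
  shows "norm (\<Sum>j\<in>UNIV. (z $ j) *\<^sub>R X j \<omega>) \<le> A_sparse X m \<omega>"
  unfolding A_sparse_def by (rule cSup_upper[OF _ A_sparse_bdd_above]) (use assms in blast)

lemma A_sparse_nonneg:
  fixes X :: "'N::finite \<Rightarrow> 'a \<Rightarrow> real ^ 'n::finite"
  assumes "1 \<le> m"
  shows "0 \<le> A_sparse X m \<omega>"
proof -
  fix i0 :: 'N
  have "supp_vec (axis i0 (1::real)) = {i0}" unfolding supp_vec_def by (auto simp: axis_def)
  then have "norm (\<Sum>j\<in>UNIV. (axis i0 (1::real) $ j) *\<^sub>R X j \<omega>) \<le> A_sparse X m \<omega>"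
    using assms by (intro A_sparse_upper) auto
  then show ?thesis by (meson norm_ge_zero order_trans)
qed

text \<open>By homogeneity, A_m bounds the image of every m-sparse vector, not only unit ones.\<close>
lemma A_sparse_scaled:
  fixes X :: "'N::finite \<Rightarrow> 'a \<Rightarrow> real ^ 'n::finite"
  assumes "card (supp_vec w) \<le> m"
  shows "norm (\<Sum>j\<in>UNIV. (w $ j) *\<^sub>R X j \<omega>) \<le> norm w * A_sparse X m \<omega>"
proof (cases "w = 0")
  case False
  define z where "z = (1 / norm w) *\<^sub>R w"
  have unit_z: "norm z = 1" using False by (simp add: z_def)
  have "supp_vec z = supp_vec w" using False by (auto simp: z_def supp_vec_def)
  then have "norm (\<Sum>j\<in>UNIV. (z $ j) *\<^sub>R X j \<omega>) \<le> A_sparse X m \<omega>"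
    using A_sparse_upper[OF unit_z] assms by simp
  moreover have "(\<Sum>j\<in>UNIV. (z $ j) *\<^sub>R X j \<omega>) = (1 / norm w) *\<^sub>R (\<Sum>j\<in>UNIV. (w $ j) *\<^sub>R X j \<omega>)"
    by (simp add: z_def scaleR_sum_right)
  ultimately show ?thesis using False by (simp add: field_simps)
qed simp

text \<open>The vector Y = sum_{j not in F} x_j X_j is the image of an m-sparse vector of norm at
  most beta, so |Y| <= beta * A_m.\<close>
lemma off_block_sum_le:
  fixes X :: "'N::finite \<Rightarrow> 'a \<Rightarrow> real ^ 'n::finite"
  assumes "1 \<le> m" and x: "x \<in> B_sparse m \<beta>"
  shows "norm (off_block_sum F x (\<lambda>i. X i \<omega>)) \<le> \<beta> * A_sparse X m \<omega>"
proof -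
  define w where "w = (\<chi> j. if j \<in> F then 0 else x $ j)"
  have Y: "off_block_sum F x (\<lambda>i. X i \<omega>) = (\<Sum>j\<in>UNIV. (w $ j) *\<^sub>R X j \<omega>)"
    unfolding off_block_sum_def w_def by (rule sum.mono_neutral_cong_left) auto
  have "supp_vec w \<subseteq> supp_vec x" by (auto simp: supp_vec_def w_def)
  then have "card (supp_vec w) \<le> card (supp_vec x)" by (intro card_mono) auto
  also have "\<dots> \<le> m" using x unfolding B_sparse_def by simp
  finally have sparse: "card (supp_vec w) \<le> m" .
  have "norm w \<le> norm x" by (rule norm_le_componentwise_cart) (auto simp: w_def)
  then have small: "norm w \<le> \<beta>" using x unfolding B_sparse_def by simp
  have "norm (off_block_sum F x (\<lambda>i. X i \<omega>)) \<le> norm w * A_sparse X m \<omega>"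
    unfolding Y by (rule A_sparse_scaled[OF sparse])
  also have "\<dots> \<le> \<beta> * A_sparse X m \<omega>"
    by (rule mult_right_mono[OF small A_sparse_nonneg[OF assms(1)]])
  finally show ?thesis .
qed

lemma large_cross_sum_imp_large_exp:
  fixes X :: "'N::finite \<Rightarrow> 'a \<Rightarrow> real ^ 'n::finite"
  assumes "1 \<le> m" and x: "x \<in> B_sparse m \<beta>" and "c > 0" "L \<ge> 0"
    and large: "(\<Sum>i\<in>F. \<bar>((z $ i) *\<^sub>R X i \<omega>) \<bullet> (\<Sum>j\<in>UNIV - F. (x $ j) *\<^sub>R X j \<omega>)\<bar>)
                  > c * \<beta> * L * A_sparse X m \<omega>"
  shows "exp L \<le> exp_cross c F x z (\<lambda>i. X i \<omega>)"
proof -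
  let ?Y = "off_block_sum F x (\<lambda>i. X i \<omega>)" and ?S = "cross_stat F x z (\<lambda>i. X i \<omega>)"
  have "(\<Sum>i\<in>F. \<bar>((z $ i) *\<^sub>R X i \<omega>) \<bullet> (\<Sum>j\<in>UNIV - F. (x $ j) *\<^sub>R X j \<omega>)\<bar>) = ?S"
    unfolding cross_stat_def off_block_sum_def by (simp add: abs_mult)
  moreover have "c * L * norm ?Y \<le> c * L * (\<beta> * A_sparse X m \<omega>)"
    using off_block_sum_le[OF assms(1) x] assms(3,4) by (intro mult_left_mono) auto
  ultimately have gt: "c * L * norm ?Y < ?S"
    using large by (simp add: mult_ac)
  have "?Y \<noteq> 0"
  proof
    assume "?Y = 0"
    then have "?S = 0" unfolding cross_stat_def by simp
    with gt \<open>?Y = 0\<close> show False by simp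
  qed
  with gt \<open>c > 0\<close> have "L < ?S / (c * norm ?Y)"
    by (simp add: pos_less_divide_eq mult_ac)
  then show ?thesis unfolding exp_cross_def by simp
qed

section \<open>Markov's inequality with a union bound\<close>

lemma markov_union_bound:
  fixes f :: "'i \<Rightarrow> 'a \<Rightarrow> real"
  assumes "prob_space M" "finite I" "t > 0"
    and f_meas: "\<And>i. i \<in> I \<Longrightarrow> f i \<in> borel_measurable M"
    and moment: "\<And>i. i \<in> I \<Longrightarrow> (\<integral>\<^sup>+ \<omega>. ennreal (f i \<omega>) \<partial>M) \<le> ennreal (b i)"
    and b_nonneg: "\<And>i. i \<in> I \<Longrightarrow> 0 \<le> b i"
    and cover: "\<And>\<omega>. \<omega> \<in> S \<Longrightarrow> \<exists>i\<in>I. t \<le> f i \<omega>"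
  shows "measure M S \<le> (\<Sum>i\<in>I. b i) / t"
proof (cases "S \<in> sets M")
  case False
  then show ?thesis using b_nonneg \<open>t > 0\<close> by (simp add: measure_notin_sets sum_nonneg)
next
  case True
  interpret prob_space M by fact
  have indicator_le: "indicator S \<omega> \<le> (\<Sum>i\<in>I. ennreal (f i \<omega>) * ennreal (1 / t))" for \<omega>
  proof (cases "\<omega> \<in> S")
    case True
    then obtain i where i: "i \<in> I" "t \<le> f i \<omega>" using cover by blast
    then have "ennreal 1 \<le> ennreal (f i \<omega> * (1 / t))"
      using \<open>t > 0\<close> by (intro ennreal_leI) (simp add: field_simps)
    also have "\<dots> = ennreal (f i \<omega>) * ennreal (1 / t)"
      by (rule ennreal_mult) (use i \<open>t > 0\<close> in auto)
    also have "\<dots> \<le> (\<Sum>i\<in>I. ennreal (f i \<omega>) * ennreal (1 / t))"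
      by (rule member_le_sum) (use i \<open>finite I\<close> in auto)
    finally show ?thesis using True by simp
  qed simp
  have "ennreal (measure M S) = (\<integral>\<^sup>+ \<omega>. indicator S \<omega> \<partial>M)"
    using True by (simp add: emeasure_eq_measure)
  also have "\<dots> \<le> (\<integral>\<^sup>+ \<omega>. (\<Sum>i\<in>I. ennreal (f i \<omega>) * ennreal (1 / t)) \<partial>M)"
    by (intro nn_integral_mono indicator_le)
  also have "\<dots> = (\<Sum>i\<in>I. (\<integral>\<^sup>+ \<omega>. ennreal (f i \<omega>) \<partial>M) * ennreal (1 / t))"
    using f_meas by (simp add: nn_integral_sum nn_integral_multc)
  also have "\<dots> \<le> (\<Sum>i\<in>I. ennreal (b i) * ennreal (1 / t))"
    by (intro sum_mono mult_right_mono moment) auto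
  also have "\<dots> = ennreal ((\<Sum>i\<in>I. b i) / t)"
    using b_nonneg \<open>t > 0\<close>
    by (simp add: ennreal_mult[symmetric] sum_ennreal sum_nonneg sum_divide_distrib)
  finally show ?thesis
    using b_nonneg \<open>t > 0\<close> by (simp add: ennreal_le_iff sum_nonneg)
qed

section \<open>Counting supports and net points\<close>

text \<open>The classical estimate sum_{j <= k} (N choose j) <= (e N / k)^k, from
  (k/N)^k sum_j (N choose j) <= (1 + k/N)^N <= e^k.\<close>
lemma sum_choose_bound:
  fixes k N :: nat
  assumes "1 \<le> k" "k \<le> N"
  shows "(\<Sum>j\<le>k. real (N choose j)) \<le> (exp 1 * real N / real k) ^ k"
proof -
  define t where "t = real k / real N"
  have t0: "0 < t" and t1: "t \<le> 1" using assms by (auto simp: t_def)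
  have "t ^ k * (\<Sum>j\<le>k. real (N choose j)) = (\<Sum>j\<le>k. real (N choose j) * t ^ k)"
    by (simp add: sum_distrib_left mult.commute)
  also have "\<dots> \<le> (\<Sum>j\<le>k. real (N choose j) * t ^ j)"
    by (intro sum_mono mult_left_mono power_decreasing) (use t0 t1 in auto)
  also have "\<dots> \<le> (\<Sum>j\<le>N. real (N choose j) * t ^ j)"
    by (intro sum_mono2) (use assms t0 in auto)
  also have "\<dots> = (t + 1) ^ N"
    by (simp add: binomial_ring)
  also have "\<dots> \<le> exp t ^ N"
    by (intro power_mono) (use t0 in \<open>auto simp: add.commute exp_ge_add_one_self\<close>)
  also have "\<dots> = exp 1 ^ k"
    using assms by (simp add: t_def flip: exp_of_nat_mult)
  finally have "t ^ k * (\<Sum>j\<le>k. real (N choose j)) \<le> exp 1 ^ k" .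
  then have "(\<Sum>j\<le>k. real (N choose j)) \<le> exp 1 ^ k / t ^ k"
    using t0 by (simp add: field_simps)
  also have "\<dots> = (exp 1 * real N / real k) ^ k"
    using assms by (simp add: t_def power_divide field_simps)
  finally show ?thesis .
qed

lemma card_small_subsets:
  "card {F :: 'N::finite set. card F \<le> k} = (\<Sum>j\<le>k. CARD('N) choose j)"
proof -
  have "{F :: 'N set. card F \<le> k} = (\<Union>j\<in>{..k}. {F. F \<subseteq> UNIV \<and> card F = j})" by auto
  then show ?thesis
    by (simp only:) (subst card_UN_disjoint, auto intro!: sum.cong simp: n_subsets[of "UNIV :: 'N set", simplified])
qed

text \<open>The union bound runs over triples (F, x, z) with |F| <= k, x in B and z in Net F,
  each weighted by its moment bound 2^|F|; their total weight is at most
  |B| (6 e N / (k eps))^k.\<close>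
lemma weighted_triple_count:
  fixes Net :: "'N::finite set \<Rightarrow> (real ^ 'N) set" and B :: "(real ^ 'N) set"
  assumes "1 \<le> k" "k \<le> CARD('N)" "0 < \<epsilon>" "\<epsilon> \<le> 1" "finite B"
    and net_finite: "\<And>F. finite (Net F)"
    and net_card: "\<And>F. real (card (Net F)) \<le> (3 / \<epsilon>) ^ card F"
  shows "(\<Sum>(F, x, z) \<in> Sigma {F. card F \<le> k} (\<lambda>F. B \<times> Net F). (2::real) ^ card F)
    \<le> real (card B) * (6 * exp 1 * real CARD('N) / (real k * \<epsilon>)) ^ k"
proof -
  let ?Fk = "{F :: 'N set. card F \<le> k}"
  have "(\<Sum>(F, x, z) \<in> Sigma ?Fk (\<lambda>F. B \<times> Net F). (2::real) ^ card F)
      = (\<Sum>F\<in>?Fk. real (card B) * real (card (Net F)) * 2 ^ card F)"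
    using \<open>finite B\<close> net_finite
    by (subst sum.Sigma[symmetric]) (auto simp: card_cartesian_product)
  also have "\<dots> \<le> (\<Sum>F\<in>?Fk. real (card B) * (3 / \<epsilon>) ^ card F * 2 ^ card F)"
    by (intro sum_mono mult_right_mono mult_left_mono net_card) auto
  also have "\<dots> = (\<Sum>F\<in>?Fk. real (card B) * (6 / \<epsilon>) ^ card F)"
    by (simp add: power_mult_distrib[symmetric] mult.assoc)
  also have "\<dots> \<le> (\<Sum>F\<in>?Fk. real (card B) * (6 / \<epsilon>) ^ k)"
    by (intro sum_mono mult_left_mono power_increasing) (use assms in auto)
  also have "\<dots> = real (card ?Fk) * real (card B) * (6 / \<epsilon>) ^ k"
    by simp
  also have "\<dots> \<le> (exp 1 * real CARD('N) / real k) ^ k * real (card B) * (6 / \<epsilon>) ^ k"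
    using sum_choose_bound[OF assms(1,2)] assms(3)
    by (intro mult_right_mono) (auto simp: card_small_subsets)
  also have "\<dots> = real (card B) * (6 * exp 1 * real CARD('N) / (real k * \<epsilon>)) ^ k"
    by (simp add: power_mult_distrib[symmetric] mult_ac)
  finally show ?thesis .
qed

theorem mainTheorem4:
  fixes M :: "'a measure"
    and X :: "'N::finite \<Rightarrow> 'a \<Rightarrow> real ^ 'n::finite"
    and \<psi> \<epsilon> \<alpha> \<beta> L :: real
    and k m :: nat
    and \<B> :: "(real ^ 'N) set"
    and Net :: "'N set \<Rightarrow> (real ^ 'N) set"
  assumes "prob_space M"
    and "\<And>i. X i \<in> borel_measurable M"
    and "prob_space.indep_vars M (\<lambda>_. borel) X UNIV"
    and "\<psi> > 0"
    and "\<And>i y. norm y = 1 \<Longrightarrow> psi1_norm M (\<lambda>\<omega>. X i \<omega> \<bullet> y) \<le> ereal \<psi>"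
    and "1 \<le> k" "k \<le> CARD('N)" "1 \<le> m" "m \<le> CARD('N)"
    and "0 < \<epsilon>" "\<epsilon> \<le> 1" "0 < \<alpha>" "\<alpha> \<le> 1" "\<beta> > 0" "L > 0"
    and "\<B> \<subseteq> B_sparse m \<beta>" "finite \<B>"
    and "is_net_family Net \<epsilon> \<alpha>"
  shows "measure M {\<omega> \<in> space M. \<exists>F x z. card F \<le> k \<and> x \<in> \<B> \<and> z \<in> Net F \<and>
            (\<Sum>i\<in>F. \<bar>((z $ i) *\<^sub>R X i \<omega>) \<bullet> (\<Sum>j\<in>UNIV - F. (x $ j) *\<^sub>R X j \<omega>)\<bar>)
              > \<psi> * \<alpha> * \<beta> * L * A_sparse X m \<omega>}
         \<le> real (card \<B>) * (6 * exp 1 * real CARD('N) / (real k * \<epsilon>)) ^ k * exp (- L)"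
  (is "measure M ?S \<le> _")
proof -
  note Xm = assms(2)
  define I where "I = Sigma {F. card F \<le> k} (\<lambda>F. \<B> \<times> Net F)"
  have net: "Net F \<subseteq> net_domain F \<alpha>" "finite (Net F)" "real (card (Net F)) \<le> (3 / \<epsilon>) ^ card F" for F
    using assms(18) unfolding is_net_family_def by auto
  have "measure M ?S \<le> (\<Sum>(F, x, z)\<in>I. 2 ^ card F) / exp L"
  proof (rule markov_union_bound[OF assms(1) _ exp_gt_zero,
        where f = "\<lambda>(F, x, z) \<omega>. exp_cross (\<psi> * \<alpha>) F x z (\<lambda>i. X i \<omega>)"])
    show "finite I" unfolding I_def using net(2) assms(17) by auto
    show "(case i of (F, x, z) \<Rightarrow> \<lambda>\<omega>. exp_cross (\<psi> * \<alpha>) F x z (\<lambda>i. X i \<omega>)) \<in> borel_measurable M" for i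
      using exp_cross_random_measurable[where X = X, OF Xm] by (auto split: prod.split)
    show "(\<integral>\<^sup>+ \<omega>. ennreal ((case i of (F, x, z) \<Rightarrow> \<lambda>\<omega>. exp_cross (\<psi> * \<alpha>) F x z (\<lambda>i. X i \<omega>)) \<omega>) \<partial>M)
        \<le> ennreal (case i of (F, x, z) \<Rightarrow> 2 ^ card F)" if "i \<in> I" for i
    proof -
      obtain F x z where i: "i = (F, x, z)" and "z \<in> Net F"
        using \<open>i \<in> I\<close> unfolding I_def by auto
      then have z_small: "\<bar>z $ j\<bar> \<le> \<alpha>" for j using net(1) unfolding net_domain_def by auto
      have "(\<integral>\<^sup>+ \<omega>. ennreal (exp_cross (\<psi> * \<alpha>) F x z (\<lambda>i. X i \<omega>)) \<partial>M) \<le> 2 ^ card F"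
        by (rule exp_cross_moment_bound[OF assms(1-5,12) z_small])
      then show ?thesis unfolding i by (simp add: ennreal_power[symmetric])
    qed
    show "\<exists>i\<in>I. exp L \<le> (case i of (F, x, z) \<Rightarrow> \<lambda>\<omega>. exp_cross (\<psi> * \<alpha>) F x z (\<lambda>i. X i \<omega>)) \<omega>"
      if "\<omega> \<in> ?S" for \<omega>
    proof -
      obtain F x z where "card F \<le> k" "x \<in> \<B>" "z \<in> Net F" and large:
        "(\<Sum>i\<in>F. \<bar>((z $ i) *\<^sub>R X i \<omega>) \<bullet> (\<Sum>j\<in>UNIV - F. (x $ j) *\<^sub>R X j \<omega>)\<bar>)
           > \<psi> * \<alpha> * \<beta> * L * A_sparse X m \<omega>"
        using \<open>\<omega> \<in> ?S\<close> by blast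
      moreover have "exp L \<le> exp_cross (\<psi> * \<alpha>) F x z (\<lambda>i. X i \<omega>)"
        using large \<open>x \<in> \<B>\<close> assms by (intro large_cross_sum_imp_large_exp[of m x \<beta>]) auto
      ultimately show ?thesis unfolding I_def by force
    qed
  qed auto
  also have "\<dots> \<le> real (card \<B>) * (6 * exp 1 * real CARD('N) / (real k * \<epsilon>)) ^ k / exp L"
    unfolding I_def using assms(6,7,10,11,17) net(2,3)
    by (intro divide_right_mono weighted_triple_count) auto
  finally show ?thesis by (simp add: exp_minus field_simps)
qed

end
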